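(* Let $X$ be a real random variable with finite fourth moment and $\mathbb{E}(X)=0$; write $\mu_2=\mathbb{E}(X^2)$ and $\mu_4=\mathbb{E}(X^4)$. Let $L=(X_1,\dots,X_n)$ be an i.i.d. sample of $X$ with $n\ge 2$. For a sample $(Y_1,\dots,Y_k)$ with $k\ge 2$ let $\hat v(Y_1,\dots,Y_k)=\frac1{k-1}\sum_{i=1}^k\big(Y_i-\frac1k\sum_{j=1}^kY_j\big)^2$ be the unbiased sample variance. Fix a batch size $m\ge 2$ and $N\ge1$. Let $\mathcal U$ be the set of all functions $u:\{1,\dots,m\}\to\{1,\dots,n\}$, $L_u=(X_{u(1)},\dots,X_{u(m)})$, let $B=(U^1,\dots,U^N)$ be i.i.d. uniform on $\mathcal U$ and independent of $L$, and let $\tilde v(L,B)=\frac1N\sum_{i=1}^N\hat v(L_{U^i})$. Let $U$ be uniform on $\mathcal U$ independent of $L$, with $\mathbb{E}_U,\mathrm{Var}_U$ the conditional expectation/variance over $U$ given $L$. Then: (1) $\mathbb{E}_{(L,B)}(\tilde v(L,B))=\frac{n-1}{n}\mu_2$; (2) $\mathrm{Var}_{(L,B)}(\tilde v(L,B))=\frac1N\mathbb{E}_L\big(\mathrm{Var}_U(\hat v(L_U))\big)+\mathrm{Var}_L\big(\mathbb{E}_U(\hat v(L_U))\big)$, where $$\mathbb{E}_L\big(\mathrm{Var}_U(\hat v(L_U))\big)=\frac{n-1}{nm(m-1)}\Big(3m-3+\frac{n^2-2n+3}{n^2}(6-4m)\Big)\mu_2^2+\frac{n-1}{nm(m-1)}\Big(m-1+\frac{n-1}{n^2}(6-4m)\Big)\mu_4$$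 and $$\mathrm{Var}_L\big(\mathbb{E}_U(\hat v(L_U))\big)=\frac{(3-n)(n-1)}{n^3}\mu_2^2+\frac{(n-1)^2}{n^3}\mu_4.$$ Moreover $\mathrm{MSE}(\tilde v(L,B)):=\mathbb{E}_{(L,B)}\big((\tilde v(L,B)-\mu_2)^2\big)=\mathrm{Var}_{(L,B)}(\tilde v(L,B))+\frac1{n^2}\mu_2^2$.
   Context: $\mathbb{E}_L,\mathrm{Var}_L$ are taken with respect to the sample $L$; $\mathbb{E}_{(L,B)},\mathrm{Var}_{(L,B)}$ with respect to the pair $(L,B)$. $\tilde v$ is the bagged unbiased sample variance estimator with batch size $m$ and $N$ bagging iterations. *)

theory Defs
  imports "HOL-Probability.Probability"
begin

definition vhat :: "nat \<Rightarrow> (nat \<Rightarrow> real) \<Rightarrow> real" where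
  "vhat k Y = (1 / (real k - 1)) *
     (\<Sum>i=1..k. (Y i - (1 / real k) * (\<Sum>j=1..k. Y j))\<^sup>2)"

definition Ufuns :: "nat \<Rightarrow> nat \<Rightarrow> (nat \<Rightarrow> nat) set" where
  "Ufuns m n = PiE {1..m} (\<lambda>_. {1..n})"

definition Unif :: "nat \<Rightarrow> nat \<Rightarrow> (nat \<Rightarrow> nat) measure" where
  "Unif m n = measure_pmf (pmf_of_set (Ufuns m n))"

definition sample_meas :: "real measure \<Rightarrow> nat \<Rightarrow> (nat \<Rightarrow> real) measure" where
  "sample_meas D n = PiM {1..n} (\<lambda>_. D)"

definition bag_meas :: "nat \<Rightarrow> nat \<Rightarrow> nat \<Rightarrow> (nat \<Rightarrow> nat \<Rightarrow> nat) measure" where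
  "bag_meas m n N = PiM {1..N} (\<lambda>_. Unif m n)"

definition joint_meas :: "real measure \<Rightarrow> nat \<Rightarrow> nat \<Rightarrow> nat \<Rightarrow> ((nat \<Rightarrow> real) \<times> (nat \<Rightarrow> nat \<Rightarrow> nat)) measure" where
  "joint_meas D n m N = sample_meas D n \<Otimes>\<^sub>M bag_meas m n N"

definition subsample :: "(nat \<Rightarrow> real) \<Rightarrow> (nat \<Rightarrow> nat) \<Rightarrow> (nat \<Rightarrow> real)" where
  "subsample L u = (\<lambda>i. L (u i))"

definition vtilde :: "nat \<Rightarrow> nat \<Rightarrow> (nat \<Rightarrow> real) \<Rightarrow> (nat \<Rightarrow> nat \<Rightarrow> nat) \<Rightarrow> real" where
  "vtilde m N L B = (1 / real N) * (\<Sum>i=1..N. vhat m (subsample L (B i)))"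

text \<open>Conditional expectation / variance over U (uniform, independent of L) given L.\<close>
definition EU :: "nat \<Rightarrow> nat \<Rightarrow> (nat \<Rightarrow> real) \<Rightarrow> real" where
  "EU m n L = prob_space.expectation (Unif m n) (\<lambda>u. vhat m (subsample L u))"

definition VarU :: "nat \<Rightarrow> nat \<Rightarrow> (nat \<Rightarrow> real) \<Rightarrow> real" where
  "VarU m n L = prob_space.variance (Unif m n) (\<lambda>u. vhat m (subsample L u))"

end

(*
  For independent centred variables X_i, i in J, with common second and fourth moments mu2 and
  mu4, the expectations of T^2, S_2^2, S_3 T, S_2 T^2 and T^4 (where S_p = sum_i X_i^p and
  T = S_1) follow by induction on J: after splitting off one variable, every cross term
  factorises by independence, and the terms with a centred factor to the first power vanish.
  Expanding sum_i (X_i - mean)^2 and sum_i (X_i - mean)^4 in power sums then yields their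
  expectations and the second moment of the former.

  This is applied three times. Given L, the coordinates L(U_i) - mean L of a uniform U are
  independent and centred, with the empirical central moments m2, m4 of L as moments; hence
  E_U vhat = m2 and Var_U vhat = m4 / m + (3 - m) / (m (m - 1)) m2^2. The coordinates of L
  themselves give the expectations of m2, m2^2 and m4. Finally, the bagging draws are i.i.d.
  copies of U, so given L the estimator vtilde has mean E_U vhat and second moment
  (E_U vhat)^2 + Var_U vhat / N, and Fubini over the product of the sample and bagging
  distributions assembles the pieces.
*)
theory Submission
  imports Defs
begin

section \<open>Power sums\<close>

definition power_sum :: "nat \<Rightarrow> 'i set \<Rightarrow> ('i \<Rightarrow> real) \<Rightarrow> real" where
  "power_sum p J x = (\<Sum>i\<in>J. x i ^ p)"

definition central_power_sum :: "nat \<Rightarrow> 'i set \<Rightarrow> ('i \<Rightarrow> real) \<Rightarrow> real" where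
  "central_power_sum p J x = (\<Sum>i\<in>J. (x i - power_sum 1 J x / card J) ^ p)"

lemma power_sum_insert:
  "finite J \<Longrightarrow> a \<notin> J \<Longrightarrow> power_sum p (insert a J) x = x a ^ p + power_sum p J x"
  unfolding power_sum_def by simp

lemma power_sum_restrict [simp]: "power_sum p J (restrict x J) = power_sum p J x"
  unfolding power_sum_def by (intro sum.cong) auto

lemma borel_measurable_power_sum [measurable]:
  "power_sum p J \<in> borel_measurable (PiM J (\<lambda>_. borel))"
  unfolding power_sum_def by measurable

lemma abs_power_sum_le:
  assumes "finite J" "1 \<le> p"
  shows "\<bar>power_sum p J x\<bar> \<le> (\<Sum>i\<in>J. \<bar>x i\<bar>) ^ p"
proof -
  let ?A = "\<Sum>i\<in>J. \<bar>x i\<bar>"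
  have "\<bar>x i\<bar> ^ p \<le> \<bar>x i\<bar> * ?A ^ (p - 1)" if "i \<in> J" for i
  proof -
    have "\<bar>x i\<bar> \<le> ?A" using assms(1) that by (intro member_le_sum) auto
    then have "\<bar>x i\<bar> ^ (p - 1) \<le> ?A ^ (p - 1)" by (intro power_mono) auto
    then show ?thesis using assms(2)
      by (metis abs_ge_zero mult_left_mono power_Suc Suc_diff_1 not_one_le_zero neq0_conv)
  qed
  then have "(\<Sum>i\<in>J. \<bar>x i\<bar> ^ p) \<le> (\<Sum>i\<in>J. \<bar>x i\<bar> * ?A ^ (p - 1))"
    by (rule sum_mono)
  also have "\<dots> = ?A * ?A ^ (p - 1)" by (simp add: sum_distrib_right)
  also have "\<dots> = ?A ^ p" using assms(2) by (simp add: power_eq_if)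
  finally show ?thesis
    unfolding power_sum_def using sum_abs[of "\<lambda>i. x i ^ p" J] by (simp add: power_abs)
qed

lemma sum_abs_power4_le:
  fixes x :: "'i \<Rightarrow> real"
  shows "(\<Sum>i\<in>J. \<bar>x i\<bar>) ^ 4 \<le> real (card J) ^ 3 * (\<Sum>i\<in>J. x i ^ 4)"
proof -
  have "(\<Sum>i\<in>J. \<bar>x i\<bar>) ^ 4 = ((\<Sum>i\<in>J. \<bar>x i\<bar>)\<^sup>2)\<^sup>2" by simp
  also have "\<dots> \<le> ((\<Sum>i\<in>J. x i ^ 2) * card J)\<^sup>2"
    using sum_squared_le_sum_of_squares[of "\<lambda>i. \<bar>x i\<bar>" J] by (intro power_mono) auto
  also have "\<dots> = (\<Sum>i\<in>J. x i ^ 2)\<^sup>2 * card J ^ 2" by (simp add: power_mult_distrib)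
  also have "\<dots> \<le> ((\<Sum>i\<in>J. (x i ^ 2)\<^sup>2) * card J) * card J ^ 2"
    using sum_squared_le_sum_of_squares[of "\<lambda>i. x i ^ 2" J] by (intro mult_right_mono) auto
  finally show ?thesis by (simp add: power_mult_distrib eval_nat_numeral mult_ac)
qed

lemma power_le_one_add_power:
  fixes x :: real
  assumes "0 \<le> x" "d \<le> e"
  shows "x ^ d \<le> 1 + x ^ e"
proof (cases "x \<le> 1")
  case True
  then have "x ^ d \<le> 1" using assms(1) by (rule power_le_one[rotated])
  then show ?thesis using assms(1) by (simp add: add_increasing2)
next
  case False
  then have "x ^ d \<le> x ^ e" using assms(2) by (intro power_increasing) auto
  then show ?thesis by simp
qed

lemma central_power_sum_shift:
  "central_power_sum p J (\<lambda>i. x i - c) = central_power_sum p J x"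
proof (cases "finite J \<and> J \<noteq> {}")
  case True
  then have "power_sum 1 J (\<lambda>i. x i - c) / card J = power_sum 1 J x / card J - c"
    by (simp add: power_sum_def sum_subtractf field_simps)
  then show ?thesis unfolding central_power_sum_def by (simp add: algebra_simps)
qed (auto simp: central_power_sum_def)

lemma central_power_sum_2:
  assumes "finite J" "J \<noteq> {}"
  shows "central_power_sum 2 J x = power_sum 2 J x - power_sum 1 J x ^ 2 / card J"
proof -
  define t where "t = power_sum 1 J x / card J"
  have k: "card J > 0" using assms by (simp add: card_gt_0_iff)
  have "central_power_sum 2 J x = (\<Sum>i\<in>J. x i ^ 2 - 2 * t * x i + t ^ 2)"
    unfolding central_power_sum_def t_def[symmetric]
    by (intro sum.cong refl) (simp add: power2_diff)
  also have "\<dots> = power_sum 2 J x - 2 * t * power_sum 1 J x + card J * t ^ 2"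
    by (simp add: sum.distrib sum_subtractf sum_distrib_left power_sum_def)
  also have "\<dots> = power_sum 2 J x - power_sum 1 J x ^ 2 / card J"
    using k by (simp add: t_def field_simps power2_eq_square)
  finally show ?thesis .
qed

lemma central_power_sum_4:
  assumes "finite J" "J \<noteq> {}"
  shows "central_power_sum 4 J x
    = power_sum 4 J x - 4 * (power_sum 3 J x * power_sum 1 J x) / card J
      + 6 * (power_sum 2 J x * power_sum 1 J x ^ 2) / card J ^ 2
      - 3 * power_sum 1 J x ^ 4 / card J ^ 3"
proof -
  define t where "t = power_sum 1 J x / card J"
  have k: "card J > 0" using assms by (simp add: card_gt_0_iff)
  have "central_power_sum 4 J x
      = (\<Sum>i\<in>J. x i ^ 4 - 4 * t * x i ^ 3 + 6 * t ^ 2 * x i ^ 2 - 4 * t ^ 3 * x i + t ^ 4)"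
    unfolding central_power_sum_def t_def[symmetric] by (intro sum.cong refl) algebra
  also have "\<dots> = power_sum 4 J x - 4 * t * power_sum 3 J x + 6 * t ^ 2 * power_sum 2 J x
      - 4 * t ^ 3 * power_sum 1 J x + card J * t ^ 4"
    by (simp add: sum.distrib sum_subtractf sum_distrib_left power_sum_def)
  also have "\<dots> = power_sum 4 J x - 4 * (power_sum 3 J x * power_sum 1 J x) / card J
      + 6 * (power_sum 2 J x * power_sum 1 J x ^ 2) / card J ^ 2
      - 3 * power_sum 1 J x ^ 4 / card J ^ 3"
    using k by (simp add: t_def field_simps) (simp add: eval_nat_numeral algebra_simps)
  finally show ?thesis .
qed

lemma vhat_eq_central_power_sum: "vhat m Y = central_power_sum 2 {1..m} Y / (real m - 1)"
  unfolding vhat_def central_power_sum_def power_sum_def by simp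

lemma indep_vars_PiM_components:
  assumes "\<And>i. i \<in> I \<Longrightarrow> prob_space (M i)"
  shows "prob_space.indep_vars (PiM I M) M (\<lambda>i x. x i) I"
proof -
  interpret P: prob_space "PiM I M" using assms by (rule prob_space_PiM)
  show ?thesis
  proof (cases "I = {}")
    case False
    have "distr (PiM I M) (PiM I M) (\<lambda>x. restrict x I) = distr (PiM I M) (PiM I M) (\<lambda>x. x)"
      by (intro distr_cong) (auto simp: space_PiM)
    moreover have "PiM I (\<lambda>i. distr (PiM I M) (M i) (\<lambda>x. x i)) = PiM I M"
      by (intro PiM_cong refl distr_PiM_component assms) auto
    ultimately show ?thesis
      using False by (subst P.indep_vars_iff_distr_eq_PiM') auto
  qed (unfold P.indep_vars_def P.indep_sets_def, auto)
qed

lemma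
  fixes f :: "_ \<Rightarrow> real"
  assumes "\<And>i. i \<in> I \<Longrightarrow> prob_space (M i)" "i \<in> I" "f \<in> borel_measurable (M i)"
  shows integral_PiM_component: "(\<integral>x. f (x i) \<partial>PiM I M) = integral\<^sup>L (M i) f"
    and integrable_PiM_component_iff: "integrable (PiM I M) (\<lambda>x. f (x i)) \<longleftrightarrow> integrable (M i) f"
proof -
  have i: "(\<lambda>x. x i) \<in> measurable (PiM I M) (M i)"
    using assms(2) by (rule measurable_component_singleton)
  have "distr (PiM I M) (M i) (\<lambda>x. x i) = M i"
    using assms(1,2) by (rule distr_PiM_component)
  then show "(\<integral>x. f (x i) \<partial>PiM I M) = integral\<^sup>L (M i) f"
    and "integrable (PiM I M) (\<lambda>x. f (x i)) \<longleftrightarrow> integrable (M i) f"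
    using integral_distr[OF i assms(3)] integrable_distr_eq[OF i assms(3)] by simp_all
qed

lemma (in pair_sigma_finite) Fubini_nonneg:
  fixes f :: "'a \<times> 'b \<Rightarrow> real"
  assumes f: "f \<in> borel_measurable (M1 \<Otimes>\<^sub>M M2)" and nonneg: "\<And>z. 0 \<le> f z"
    and "\<And>x. integrable M2 (\<lambda>y. f (x, y))" and "integrable M1 (\<lambda>x. \<integral>y. f (x, y) \<partial>M2)"
  shows "integrable (M1 \<Otimes>\<^sub>M M2) f"
    and "(\<integral>z. f z \<partial>(M1 \<Otimes>\<^sub>M M2)) = (\<integral>x. \<integral>y. f (x, y) \<partial>M2 \<partial>M1)"
proof -
  show int: "integrable (M1 \<Otimes>\<^sub>M M2) f"
    using f assms(3,4) nonneg by (intro Fubini_integrable) simp_all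
  show "(\<integral>z. f z \<partial>(M1 \<Otimes>\<^sub>M M2)) = (\<integral>x. \<integral>y. f (x, y) \<partial>M2 \<partial>M1)"
    using integral_fst'[OF int] by simp
qed

lemma (in prob_space) bias_variance_decomposition:
  fixes f :: "'a \<Rightarrow> real"
  assumes "integrable M f" "integrable M (\<lambda>x. f x ^ 2)"
  shows "expectation (\<lambda>x. (f x - c) ^ 2) = variance f + (expectation f - c) ^ 2"
proof -
  have "expectation (\<lambda>x. (f x - c) ^ 2) = expectation (\<lambda>x. f x ^ 2) - 2 * c * expectation f + c ^ 2"
    using assms by (simp add: power2_diff prob_space)
  then show ?thesis
    using variance_eq[OF assms] by (simp add: power2_diff)
qed

section \<open>Independent centred families\<close>

locale centered_indep_family = prob_space +
  fixes X :: "'i \<Rightarrow> 'a \<Rightarrow> real" and I :: "'i set" and \<mu>2 \<mu>4 :: real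
  assumes indep: "indep_vars (\<lambda>_. borel) X I"
    and integrable_power4: "i \<in> I \<Longrightarrow> integrable M (\<lambda>\<omega>. X i \<omega> ^ 4)"
    and mean_zero: "i \<in> I \<Longrightarrow> expectation (X i) = 0"
    and moment2: "i \<in> I \<Longrightarrow> expectation (\<lambda>\<omega>. X i \<omega> ^ 2) = \<mu>2"
    and moment4: "i \<in> I \<Longrightarrow> expectation (\<lambda>\<omega>. X i \<omega> ^ 4) = \<mu>4"
begin

abbreviation S :: "nat \<Rightarrow> 'i set \<Rightarrow> 'a \<Rightarrow> real" where
  "S p J \<omega> \<equiv> power_sum p J (\<lambda>i. X i \<omega>)"

lemma borel_measurable_X: "i \<in> I \<Longrightarrow> X i \<in> borel_measurable M"
  using indep by (auto simp: indep_vars_def)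

lemma integrable_power:
  assumes "i \<in> I" "e \<le> 4"
  shows "integrable M (\<lambda>\<omega>. X i \<omega> ^ e)"
proof (rule Bochner_Integration.integrable_bound)
  show "integrable M (\<lambda>\<omega>. 1 + X i \<omega> ^ 4)" using integrable_power4[OF assms(1)] by simp
  show "(\<lambda>\<omega>. X i \<omega> ^ e) \<in> borel_measurable M" using borel_measurable_X[OF assms(1)] by simp
  have "\<bar>X i \<omega>\<bar> ^ e \<le> 1 + \<bar>X i \<omega>\<bar> ^ 4" for \<omega>
    using assms(2) by (intro power_le_one_add_power) auto
  then show "AE \<omega> in M. norm (X i \<omega> ^ e) \<le> norm (1 + X i \<omega> ^ 4)"
    by (intro AE_I2) (simp add: power_abs power_even_abs_numeral)
qed

lemma integrable_power_sum_mult: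
  assumes "finite J" "J \<subseteq> I" "1 \<le> p" "1 \<le> q" "p * a + q * b \<le> 4"
  shows "integrable M (\<lambda>\<omega>. S p J \<omega> ^ a * S q J \<omega> ^ b)"
proof (rule Bochner_Integration.integrable_bound)
  let ?A = "\<lambda>\<omega>. \<Sum>i\<in>J. \<bar>X i \<omega>\<bar>"
  show "integrable M (\<lambda>\<omega>. 1 + real (card J) ^ 3 * (\<Sum>i\<in>J. X i \<omega> ^ 4))"
    using assms(2) by (intro Bochner_Integration.integrable_add integrable_mult_right
      Bochner_Integration.integrable_sum integrable_power4) auto
  have X: "\<And>i. i \<in> J \<Longrightarrow> X i \<in> borel_measurable M" using assms(2) borel_measurable_X by auto
  show "(\<lambda>\<omega>. S p J \<omega> ^ a * S q J \<omega> ^ b) \<in> borel_measurable M"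
    unfolding power_sum_def by (intro borel_measurable_times borel_measurable_power
      borel_measurable_sum X)
  have "\<bar>S p J \<omega> ^ a * S q J \<omega> ^ b\<bar> \<le> 1 + real (card J) ^ 3 * (\<Sum>i\<in>J. X i \<omega> ^ 4)" for \<omega>
  proof -
    have "\<bar>S p J \<omega> ^ a * S q J \<omega> ^ b\<bar> \<le> (?A \<omega> ^ p) ^ a * (?A \<omega> ^ q) ^ b"
      unfolding abs_mult power_abs
      by (intro mult_mono power_mono abs_power_sum_le assms) (auto intro: sum_nonneg)
    also have "\<dots> = ?A \<omega> ^ (p * a + q * b)" by (simp add: power_mult power_add)
    also have "\<dots> \<le> 1 + ?A \<omega> ^ 4"
      using assms(5) by (intro power_le_one_add_power) (auto intro: sum_nonneg)
    also have "\<dots> \<le> 1 + real (card J) ^ 3 * (\<Sum>i\<in>J. X i \<omega> ^ 4)"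
      using sum_abs_power4_le by simp
    finally show ?thesis .
  qed
  then show "AE \<omega> in M. norm (S p J \<omega> ^ a * S q J \<omega> ^ b)
      \<le> norm (1 + real (card J) ^ 3 * (\<Sum>i\<in>J. X i \<omega> ^ 4))"
    by (intro AE_I2) (auto intro: order_trans simp: sum_nonneg)
qed

lemma integrable_power_sum:
  "finite J \<Longrightarrow> J \<subseteq> I \<Longrightarrow> 1 \<le> p \<Longrightarrow> p \<le> 4 \<Longrightarrow> integrable M (S p J)"
  using integrable_power_sum_mult[of J p 1 1 0] by simp

lemma integrable_power_sum_power:
  "finite J \<Longrightarrow> J \<subseteq> I \<Longrightarrow> 1 \<le> p \<Longrightarrow> p * a \<le> 4 \<Longrightarrow> integrable M (\<lambda>\<omega>. S p J \<omega> ^ a)"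
  using integrable_power_sum_mult[of J p 1 a 0] by simp

lemma expectation_power_mult_power_sums:
  assumes "finite J" "J \<subseteq> I" "a \<in> I" "a \<notin> J" "e \<le> 4"
    and "1 \<le> p" "1 \<le> q" "p * c + q * d \<le> 4"
  shows "integrable M (\<lambda>\<omega>. X a \<omega> ^ e * (S p J \<omega> ^ c * S q J \<omega> ^ d))"
    and "expectation (\<lambda>\<omega>. X a \<omega> ^ e * (S p J \<omega> ^ c * S q J \<omega> ^ d))
        = expectation (\<lambda>\<omega>. X a \<omega> ^ e) * expectation (\<lambda>\<omega>. S p J \<omega> ^ c * S q J \<omega> ^ d)"
proof -
  let ?g = "\<lambda>x. power_sum p J x ^ c * power_sum q J x ^ d"
  have "indep_var (PiM {a} (\<lambda>_. borel)) (\<lambda>\<omega>. restrict (\<lambda>i. X i \<omega>) {a})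
      (PiM J (\<lambda>_. borel)) (\<lambda>\<omega>. restrict (\<lambda>i. X i \<omega>) J)"
    using assms(2-4) by (intro indep_var_restrict[OF indep]) auto
  then have "indep_var borel ((\<lambda>x. x a ^ e) \<circ> (\<lambda>\<omega>. restrict (\<lambda>i. X i \<omega>) {a}))
      borel (?g \<circ> (\<lambda>\<omega>. restrict (\<lambda>i. X i \<omega>) J))"
    by (rule indep_var_compose) measurable
  then have ind: "indep_var borel (\<lambda>\<omega>. X a \<omega> ^ e) borel (\<lambda>\<omega>. S p J \<omega> ^ c * S q J \<omega> ^ d)"
    by (simp add: comp_def)
  have "integrable M (\<lambda>\<omega>. X a \<omega> ^ e)" using assms(3,5) by (rule integrable_power)
  moreover have "integrable M (\<lambda>\<omega>. S p J \<omega> ^ c * S q J \<omega> ^ d)"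
    using assms by (intro integrable_power_sum_mult)
  ultimately show "integrable M (\<lambda>\<omega>. X a \<omega> ^ e * (S p J \<omega> ^ c * S q J \<omega> ^ d))"
    and "expectation (\<lambda>\<omega>. X a \<omega> ^ e * (S p J \<omega> ^ c * S q J \<omega> ^ d))
        = expectation (\<lambda>\<omega>. X a \<omega> ^ e) * expectation (\<lambda>\<omega>. S p J \<omega> ^ c * S q J \<omega> ^ d)"
    using ind by (auto intro: indep_var_integrable indep_var_lebesgue_integral)
qed

lemma
  assumes "finite J" "J \<subseteq> I"
  shows expectation_power_sum_1: "expectation (S 1 J) = 0"
    and expectation_power_sum_2: "expectation (S 2 J) = card J * \<mu>2"
    and expectation_power_sum_4: "expectation (S 4 J) = card J * \<mu>4"
  using assms integrable_power integrable_power[where e=1]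
  by (auto simp: power_sum_def mean_zero moment2 moment4 subsetD
      intro!: Bochner_Integration.integral_sum[THEN trans])

lemma expectation_power_sum_1_sq:
  assumes "finite J" "J \<subseteq> I"
  shows "expectation (\<lambda>\<omega>. S 1 J \<omega> ^ 2) = card J * \<mu>2"
  using assms
proof (induction J rule: finite_induct)
  case (insert a J)
  then have J: "finite J" "J \<subseteq> I" and a: "a \<in> I" "a \<notin> J" by auto
  note factor = expectation_power_mult_power_sums[OF J a]
  have "expectation (\<lambda>\<omega>. S 1 (insert a J) \<omega> ^ 2)
      = expectation (\<lambda>\<omega>. X a \<omega> ^ 2 + 2 * (X a \<omega> * S 1 J \<omega>) + S 1 J \<omega> ^ 2)"
    unfolding power_sum_insert[OF J(1) a(2)] power_one_right
    by (intro arg_cong[where f=expectation] ext) algebra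
  also have "\<dots> = \<mu>2 + 2 * (0 * 0) + card J * \<mu>2"
    using factor[where e=1 and p=1 and c=1 and q=1 and d=0] integrable_power[OF a(1), of 2]
      integrable_power_sum_power[OF J, of 1 2] insert.IH[OF J(2)]
    by (simp add: a mean_zero moment2 moment4)
  finally show ?case using J a by (simp add: algebra_simps power2_eq_square)
qed (simp add: power_sum_def)

lemma expectation_power_sum_2_sq:
  assumes "finite J" "J \<subseteq> I"
  shows "expectation (\<lambda>\<omega>. S 2 J \<omega> ^ 2)
    = card J * \<mu>4 + real (card J) * (real (card J) - 1) * \<mu>2 ^ 2"
  using assms
proof (induction J rule: finite_induct)
  case (insert a J)
  then have J: "finite J" "J \<subseteq> I" and a: "a \<in> I" "a \<notin> J" by auto
  note factor = expectation_power_mult_power_sums[OF J a]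
  have "expectation (\<lambda>\<omega>. S 2 (insert a J) \<omega> ^ 2)
      = expectation (\<lambda>\<omega>. X a \<omega> ^ 4 + 2 * (X a \<omega> ^ 2 * S 2 J \<omega>) + S 2 J \<omega> ^ 2)"
    unfolding power_sum_insert[OF J(1) a(2)] power_one_right
    by (intro arg_cong[where f=expectation] ext) algebra
  also have "\<dots> = \<mu>4 + 2 * (\<mu>2 * (card J * \<mu>2))
      + (card J * \<mu>4 + real (card J) * (real (card J) - 1) * \<mu>2 ^ 2)"
    using factor[where e=2 and p=2 and c=1 and q=1 and d=0] integrable_power[OF a(1), of 4]
      integrable_power_sum_power[OF J, of 2 2] insert.IH[OF J(2)]
      expectation_power_sum_2[OF J]
    by (simp add: a mean_zero moment2 moment4)
  finally show ?case using J a by (simp add: algebra_simps power2_eq_square)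
qed (simp add: power_sum_def)

lemma expectation_power_sum_3_mult_1:
  assumes "finite J" "J \<subseteq> I"
  shows "expectation (\<lambda>\<omega>. S 3 J \<omega> * S 1 J \<omega>) = card J * \<mu>4"
  using assms
proof (induction J rule: finite_induct)
  case (insert a J)
  then have J: "finite J" "J \<subseteq> I" and a: "a \<in> I" "a \<notin> J" by auto
  note factor = expectation_power_mult_power_sums[OF J a]
  have "expectation (\<lambda>\<omega>. S 3 (insert a J) \<omega> * S 1 (insert a J) \<omega>)
      = expectation (\<lambda>\<omega>. X a \<omega> ^ 4 + X a \<omega> ^ 3 * S 1 J \<omega> + X a \<omega> * S 3 J \<omega>
        + S 3 J \<omega> * S 1 J \<omega>)"
    unfolding power_sum_insert[OF J(1) a(2)] power_one_right
    by (intro arg_cong[where f=expectation] ext) algebra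
  also have "\<dots> = \<mu>4 + expectation (\<lambda>\<omega>. X a \<omega> ^ 3) * 0 + 0 * expectation (S 3 J)
      + card J * \<mu>4"
    using factor[where e=3 and p=1 and c=1 and q=1 and d=0]
      factor[where e=1 and p=3 and c=1 and q=1 and d=0] integrable_power[OF a(1), of 4]
      integrable_power_sum_mult[OF J, of 3 1 1 1] insert.IH[OF J(2)]
      expectation_power_sum_1[OF J]
    by (simp add: a mean_zero moment2 moment4)
  finally show ?case using J a by (simp add: algebra_simps power2_eq_square)
qed (simp add: power_sum_def)

lemma expectation_power_sum_2_mult_1_sq:
  assumes "finite J" "J \<subseteq> I"
  shows "expectation (\<lambda>\<omega>. S 2 J \<omega> * S 1 J \<omega> ^ 2)
    = card J * \<mu>4 + real (card J) * (real (card J) - 1) * \<mu>2 ^ 2"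
  using assms
proof (induction J rule: finite_induct)
  case (insert a J)
  then have J: "finite J" "J \<subseteq> I" and a: "a \<in> I" "a \<notin> J" by auto
  note factor = expectation_power_mult_power_sums[OF J a]
  have "expectation (\<lambda>\<omega>. S 2 (insert a J) \<omega> * S 1 (insert a J) \<omega> ^ 2)
      = expectation (\<lambda>\<omega>. X a \<omega> ^ 4 + 2 * (X a \<omega> ^ 3 * S 1 J \<omega>) + X a \<omega> ^ 2 * S 1 J \<omega> ^ 2
        + X a \<omega> ^ 2 * S 2 J \<omega> + 2 * (X a \<omega> * (S 2 J \<omega> * S 1 J \<omega>)) + S 2 J \<omega> * S 1 J \<omega> ^ 2)"
    unfolding power_sum_insert[OF J(1) a(2)] power_one_right
    by (intro arg_cong[where f=expectation] ext) algebra
  also have "\<dots> = \<mu>4 + 2 * (expectation (\<lambda>\<omega>. X a \<omega> ^ 3) * 0) + \<mu>2 * (card J * \<mu>2)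
      + \<mu>2 * (card J * \<mu>2) + 2 * (0 * expectation (\<lambda>\<omega>. S 2 J \<omega> * S 1 J \<omega>))
      + (card J * \<mu>4 + real (card J) * (real (card J) - 1) * \<mu>2 ^ 2)"
    using factor[where e=3 and p=1 and c=1 and q=1 and d=0]
      factor[where e=2 and p=1 and c=2 and q=1 and d=0]
      factor[where e=2 and p=2 and c=1 and q=1 and d=0]
      factor[where e=1 and p=2 and c=1 and q=1 and d=1] integrable_power[OF a(1), of 4]
      integrable_power_sum_mult[OF J, of 2 1 1 2] insert.IH[OF J(2)]
      expectation_power_sum_1[OF J] expectation_power_sum_1_sq[OF J]
      expectation_power_sum_2[OF J]
    by (simp add: a mean_zero moment2 moment4)
  finally show ?case using J a by (simp add: algebra_simps power2_eq_square)
qed (simp add: power_sum_def)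

lemma expectation_power_sum_1_power_4:
  assumes "finite J" "J \<subseteq> I"
  shows "expectation (\<lambda>\<omega>. S 1 J \<omega> ^ 4)
    = card J * \<mu>4 + 3 * real (card J) * (real (card J) - 1) * \<mu>2 ^ 2"
  using assms
proof (induction J rule: finite_induct)
  case (insert a J)
  then have J: "finite J" "J \<subseteq> I" and a: "a \<in> I" "a \<notin> J" by auto
  note factor = expectation_power_mult_power_sums[OF J a]
  have "expectation (\<lambda>\<omega>. S 1 (insert a J) \<omega> ^ 4)
      = expectation (\<lambda>\<omega>. X a \<omega> ^ 4 + 4 * (X a \<omega> ^ 3 * S 1 J \<omega>) + 6 * (X a \<omega> ^ 2 * S 1 J \<omega> ^ 2)
        + 4 * (X a \<omega> * S 1 J \<omega> ^ 3) + S 1 J \<omega> ^ 4)"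
    unfolding power_sum_insert[OF J(1) a(2)] power_one_right
    by (intro arg_cong[where f=expectation] ext) algebra
  also have "\<dots> = \<mu>4 + 4 * (expectation (\<lambda>\<omega>. X a \<omega> ^ 3) * 0) + 6 * (\<mu>2 * (card J * \<mu>2))
      + 4 * (0 * expectation (\<lambda>\<omega>. S 1 J \<omega> ^ 3))
      + (card J * \<mu>4 + 3 * real (card J) * (real (card J) - 1) * \<mu>2 ^ 2)"
    using factor[where e=3 and p=1 and c=1 and q=1 and d=0]
      factor[where e=2 and p=1 and c=2 and q=1 and d=0]
      factor[where e=1 and p=1 and c=3 and q=1 and d=0] integrable_power[OF a(1), of 4]
      integrable_power_sum_power[OF J, of 1 4] insert.IH[OF J(2)]
      expectation_power_sum_1[OF J] expectation_power_sum_1_sq[OF J]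
    by (simp add: a mean_zero moment2 moment4)
  finally show ?case using J a by (simp add: algebra_simps power2_eq_square)
qed (simp add: power_sum_def)

abbreviation C :: "nat \<Rightarrow> 'i set \<Rightarrow> 'a \<Rightarrow> real" where
  "C p J \<omega> \<equiv> central_power_sum p J (\<lambda>i. X i \<omega>)"

context
  fixes J assumes J: "finite J" "J \<subseteq> I" "J \<noteq> {}"
begin

private abbreviation (input) "k \<equiv> real (card J)"

private lemma card_pos: "k > 0"
  using J by (simp add: card_gt_0_iff)

private lemma C_2_eq: "C 2 J \<omega> = S 2 J \<omega> - S 1 J \<omega> ^ 2 / k"
  using J(1,3) by (rule central_power_sum_2)

private lemma C_2_sq_eq:
  "C 2 J \<omega> ^ 2 = S 2 J \<omega> ^ 2 - 2 / k * (S 2 J \<omega> * S 1 J \<omega> ^ 2) + S 1 J \<omega> ^ 4 / k ^ 2"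
  unfolding C_2_eq using card_pos by (simp add: field_simps power2_eq_square)
    (simp add: eval_nat_numeral algebra_simps)

lemma integrable_central_power_sum_2: "integrable M (C 2 J)"
  unfolding C_2_eq using J
  by (intro Bochner_Integration.integrable_diff integrable_divide integrable_power_sum
    integrable_power_sum_power) auto

lemma expectation_central_power_sum_2: "expectation (C 2 J) = (k - 1) * \<mu>2"
proof -
  have "expectation (C 2 J) = expectation (S 2 J) - expectation (\<lambda>\<omega>. S 1 J \<omega> ^ 2) / k"
    unfolding C_2_eq using J integrable_power_sum[OF J(1,2), of 2]
      integrable_power_sum_power[OF J(1,2), of 1 2]
    by (simp add: Bochner_Integration.integral_diff)
  also have "\<dots> = k * \<mu>2 - k * \<mu>2 / k"
    using expectation_power_sum_2[OF J(1,2)] expectation_power_sum_1_sq[OF J(1,2)] by simp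
  also have "\<dots> = (k - 1) * \<mu>2"
    using card_pos by (simp add: field_simps)
  finally show ?thesis .
qed

lemma integrable_central_power_sum_2_sq: "integrable M (\<lambda>\<omega>. C 2 J \<omega> ^ 2)"
  unfolding C_2_sq_eq using J
  using integrable_power_sum_mult[of J 2 1 1 2]
  by (intro Bochner_Integration.integrable_add Bochner_Integration.integrable_diff
    integrable_divide integrable_mult_right integrable_power_sum_power) auto

lemma expectation_central_power_sum_2_sq:
  "expectation (\<lambda>\<omega>. C 2 J \<omega> ^ 2)
    = (k - 1) ^ 2 / k * \<mu>4 + (k - 1) * (k\<^sup>2 - 2 * k + 3) / k * \<mu>2 ^ 2"
proof -
  have "expectation (\<lambda>\<omega>. C 2 J \<omega> ^ 2) = expectation (\<lambda>\<omega>. S 2 J \<omega> ^ 2)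
      - 2 / k * expectation (\<lambda>\<omega>. S 2 J \<omega> * S 1 J \<omega> ^ 2) + expectation (\<lambda>\<omega>. S 1 J \<omega> ^ 4) / k ^ 2"
    unfolding C_2_sq_eq using J integrable_power_sum_mult[of J 2 1 1 2]
      integrable_power_sum_power[OF J(1,2), of 2 2] integrable_power_sum_power[OF J(1,2), of 1 4]
    by (simp add: Bochner_Integration.integral_diff Bochner_Integration.integral_add)
  also have "\<dots> = (k * \<mu>4 + k * (k - 1) * \<mu>2 ^ 2) - 2 / k * (k * \<mu>4 + k * (k - 1) * \<mu>2 ^ 2)
      + (k * \<mu>4 + 3 * k * (k - 1) * \<mu>2 ^ 2) / k ^ 2"
    using expectation_power_sum_2_sq[OF J(1,2)] expectation_power_sum_2_mult_1_sq[OF J(1,2)]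
      expectation_power_sum_1_power_4[OF J(1,2)] by simp
  also have "\<dots> = (k - 1) ^ 2 / k * \<mu>4 + (k - 1) * (k\<^sup>2 - 2 * k + 3) / k * \<mu>2 ^ 2"
    using card_pos by (simp add: field_simps) (simp add: algebra_simps eval_nat_numeral)
  finally show ?thesis .
qed

lemma integrable_central_power_sum_4: "integrable M (C 4 J)"
  unfolding central_power_sum_4[OF J(1,3)] using J
    integrable_power_sum_mult[of J 3 1 1 1] integrable_power_sum_mult[of J 2 1 1 2]
  by (intro Bochner_Integration.integrable_add Bochner_Integration.integrable_diff
    integrable_divide integrable_mult_right integrable_power_sum integrable_power_sum_power) auto

lemma expectation_central_power_sum_4:
  "expectation (C 4 J)
    = (k - 1) * (k\<^sup>2 - 3 * k + 3) / k ^ 2 * \<mu>4 + 3 * (k - 1) * (2 * k - 3) / k ^ 2 * \<mu>2 ^ 2"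
proof -
  have "expectation (C 4 J) = expectation (S 4 J)
      - 4 * expectation (\<lambda>\<omega>. S 3 J \<omega> * S 1 J \<omega>) / k
      + 6 * expectation (\<lambda>\<omega>. S 2 J \<omega> * S 1 J \<omega> ^ 2) / k ^ 2
      - 3 * expectation (\<lambda>\<omega>. S 1 J \<omega> ^ 4) / k ^ 3"
    unfolding central_power_sum_4[OF J(1,3)] using J integrable_power_sum[OF J(1,2), of 4]
      integrable_power_sum_mult[of J 3 1 1 1] integrable_power_sum_mult[of J 2 1 1 2]
      integrable_power_sum_power[OF J(1,2), of 1 4]
    by (simp add: Bochner_Integration.integral_diff Bochner_Integration.integral_add)
  also have "\<dots> = k * \<mu>4 - 4 * (k * \<mu>4) / k + 6 * (k * \<mu>4 + k * (k - 1) * \<mu>2 ^ 2) / k ^ 2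
      - 3 * (k * \<mu>4 + 3 * k * (k - 1) * \<mu>2 ^ 2) / k ^ 3"
    using expectation_power_sum_4[OF J(1,2)] expectation_power_sum_3_mult_1[OF J(1,2)]
      expectation_power_sum_2_mult_1_sq[OF J(1,2)] expectation_power_sum_1_power_4[OF J(1,2)]
    by simp
  also have "\<dots> = (k - 1) * (k\<^sup>2 - 3 * k + 3) / k ^ 2 * \<mu>4
      + 3 * (k - 1) * (2 * k - 3) / k ^ 2 * \<mu>2 ^ 2"
    using card_pos by (simp add: field_simps) (simp add: algebra_simps eval_nat_numeral)
  finally show ?thesis .
qed

end

end

lemma centered_indep_family_PiM:
  assumes P: "prob_space P" and f: "f \<in> borel_measurable P" "integrable P (\<lambda>x. f x ^ 4)"
    and mean: "(\<integral>x. f x \<partial>P) = 0"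
  shows "centered_indep_family (PiM I (\<lambda>_. P)) (\<lambda>i x. f (x i)) I
    (\<integral>x. f x ^ 2 \<partial>P) (\<integral>x. f x ^ 4 \<partial>P)"
proof -
  interpret prob_space "PiM I (\<lambda>_. P)" using P by (rule prob_space_PiM)
  have "indep_vars (\<lambda>_. P) (\<lambda>i x. x i) I" using P by (rule indep_vars_PiM_components)
  then have "indep_vars (\<lambda>_. borel) (\<lambda>i x. f (x i)) I"
    by (rule indep_vars_compose2) (rule f(1))
  moreover have component: "(\<integral>x. g (f (x i)) \<partial>PiM I (\<lambda>_. P)) = (\<integral>x. g (f x) \<partial>P)"
    "integrable (PiM I (\<lambda>_. P)) (\<lambda>x. g (f (x i))) \<longleftrightarrow> integrable P (\<lambda>x. g (f x))"
    if "i \<in> I" "g \<in> borel_measurable borel" for i and g :: "real \<Rightarrow> real"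
    using f(1) that
    by (intro integral_PiM_component integrable_PiM_component_iff P
        measurable_compose[OF f(1)]; simp)+
  ultimately show ?thesis
  proof unfold_locales
    fix i assume "i \<in> I"
    from component[OF this, of "\<lambda>x. x"] component[OF this, of "\<lambda>x. x ^ 2"]
      component[OF this, of "\<lambda>x. x ^ 4"]
    show "integrable (PiM I (\<lambda>_. P)) (\<lambda>x. f (x i) ^ 4)"
      and "expectation (\<lambda>x. f (x i)) = 0"
      and "expectation (\<lambda>x. f (x i) ^ 2) = (\<integral>x. f x ^ 2 \<partial>P)"
      and "expectation (\<lambda>x. f (x i) ^ 4) = (\<integral>x. f x ^ 4 \<partial>P)"
      using f(2) mean by simp_all
  qed
qed

section \<open>Uniform resampling\<close>

definition empirical_central_moment :: "nat \<Rightarrow> nat \<Rightarrow> (nat \<Rightarrow> real) \<Rightarrow> real" where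
  "empirical_central_moment p n L = central_power_sum p {1..n} L / n"

lemma Unif_eq_Pi_pmf:
  assumes "n \<ge> 1"
  shows "Unif m n = measure_pmf (Pi_pmf {1..m} undefined (\<lambda>_. pmf_of_set {1..n}))"
proof -
  have "Ufuns m n = PiE_dflt {1..m} undefined (\<lambda>_. {1..n})"
    by (auto simp: Ufuns_def PiE_dflt_def PiE_def extensional_def)
  then show ?thesis using assms by (simp add: Unif_def Pi_pmf_of_set)
qed

lemma centered_indep_family_Unif:
  assumes n: "n \<ge> 1"
  shows "centered_indep_family (Unif m n) (\<lambda>i u. L (u i) - power_sum 1 {1..n} L / n) {1..m}
    (empirical_central_moment 2 n L) (empirical_central_moment 4 n L)"
proof -
  define c where "c = power_sum 1 {1..n} L / n"
  let ?P = "Pi_pmf {1..m} undefined (\<lambda>_. pmf_of_set {1..n})"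
  have "prob_space.indep_vars ?P (\<lambda>_. count_space UNIV) (\<lambda>i u. u i) {1..m}"
    by (rule indep_vars_Pi_pmf) simp
  then have "prob_space.indep_vars ?P (\<lambda>_. borel) (\<lambda>i u. L (u i) - c) {1..m}"
    by (rule prob_space.indep_vars_compose2[OF prob_space_measure_pmf _,
        where Y="\<lambda>_ j. L j - c"]) simp
  moreover have component: "(\<integral>u. g (u i) \<partial>measure_pmf ?P) = (\<Sum>j=1..n. g j) / n"
    if "i \<in> {1..m}" for i and g :: "nat \<Rightarrow> real"
  proof -
    have "(\<integral>u. g (u i) \<partial>measure_pmf ?P) = (\<integral>j. g j \<partial>measure_pmf (map_pmf (\<lambda>u. u i) ?P))"
      by (simp add: integral_map_pmf)
    also have "map_pmf (\<lambda>u. u i) ?P = pmf_of_set {1..n}"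
      using that by (simp add: Pi_pmf_component)
    finally show ?thesis
      using n by (simp add: integral_pmf_of_set)
  qed
  moreover have "finite (set_pmf ?P)"
    using n by (auto simp: set_Pi_pmf)
  ultimately have "centered_indep_family ?P (\<lambda>i u. L (u i) - c) {1..m}
      (empirical_central_moment 2 n L) (empirical_central_moment 4 n L)"
  proof unfold_locales
    fix i assume "i \<in> {1..m}"
    from component[OF this, of "\<lambda>j. L j - c"] component[OF this, of "\<lambda>j. (L j - c) ^ 2"]
      component[OF this, of "\<lambda>j. (L j - c) ^ 4"]
    show "measure_pmf.expectation ?P (\<lambda>u. L (u i) - c) = 0"
      and "measure_pmf.expectation ?P (\<lambda>u. (L (u i) - c) ^ 2) = empirical_central_moment 2 n L"
      and "measure_pmf.expectation ?P (\<lambda>u. (L (u i) - c) ^ 4) = empirical_central_moment 4 n L"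
      using n by (simp_all add: empirical_central_moment_def central_power_sum_def c_def
        power_sum_def sum_subtractf)
  qed (auto simp: integrable_measure_pmf_finite)
  then show ?thesis using n by (simp add: Unif_eq_Pi_pmf c_def)
qed

lemma integrable_Unif: "n \<ge> 1 \<Longrightarrow> integrable (Unif m n) (f :: _ \<Rightarrow> real)"
  unfolding Unif_eq_Pi_pmf by (intro integrable_measure_pmf_finite) (auto simp: set_Pi_pmf)

lemma
  assumes n: "n \<ge> 1" and m: "m \<ge> 2"
  shows EU_eq: "EU m n L = empirical_central_moment 2 n L"
    and VarU_eq: "VarU m n L = empirical_central_moment 4 n L / m
      + (3 - real m) / (real m * (real m - 1)) * empirical_central_moment 2 n L ^ 2"
proof -
  interpret U: centered_indep_family "Unif m n" "\<lambda>i u. L (u i) - power_sum 1 {1..n} L / n" "{1..m}"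
    "empirical_central_moment 2 n L" "empirical_central_moment 4 n L"
    using n by (rule centered_indep_family_Unif)
  have J: "finite {1..m}" "{1..m} \<subseteq> {1..m}" "{1..m} \<noteq> {}" using m by auto
  have vhat: "vhat m (subsample L u) = U.C 2 {1..m} u / (real m - 1)" for u
    by (simp add: vhat_eq_central_power_sum central_power_sum_shift subsample_def)
  have m1: "real m - 1 > 0" using m by simp
  show EU: "EU m n L = empirical_central_moment 2 n L"
    unfolding EU_def vhat using U.expectation_central_power_sum_2[OF J] m1 by simp
  have int: "integrable (Unif m n) (\<lambda>u. vhat m (subsample L u))"
    "integrable (Unif m n) (\<lambda>u. vhat m (subsample L u) ^ 2)"
    using U.integrable_central_power_sum_2[OF J] U.integrable_central_power_sum_2_sq[OF J]
    by (simp_all add: vhat power_divide)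
  have "VarU m n L = U.expectation (\<lambda>u. vhat m (subsample L u) ^ 2) - EU m n L ^ 2"
    unfolding VarU_def EU_def using int by (rule U.variance_eq)
  also have "\<dots> = U.expectation (\<lambda>u. U.C 2 {1..m} u ^ 2) / (real m - 1) ^ 2
      - empirical_central_moment 2 n L ^ 2"
    by (simp add: EU vhat power_divide)
  also have "\<dots> = ((real m - 1) ^ 2 / m * empirical_central_moment 4 n L
      + (real m - 1) * (real m ^ 2 - 2 * real m + 3) / m * empirical_central_moment 2 n L ^ 2)
      / (real m - 1) ^ 2 - empirical_central_moment 2 n L ^ 2"
    using U.expectation_central_power_sum_2_sq[OF J] by simp
  also have "\<dots> = empirical_central_moment 4 n L / m
      + (3 - real m) / (real m * (real m - 1)) * empirical_central_moment 2 n L ^ 2"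
    using m1 by (simp add: field_simps) (simp add: algebra_simps power2_eq_square)
  finally show "VarU m n L = empirical_central_moment 4 n L / m
      + (3 - real m) / (real m * (real m - 1)) * empirical_central_moment 2 n L ^ 2" .
qed

section \<open>The sample\<close>

lemma centered_indep_family_sample:
  assumes "prob_space D" "sets D = sets borel" "integrable D (\<lambda>x. x ^ 4)" "(\<integral>x. x \<partial>D) = 0"
  shows "centered_indep_family (sample_meas D n) (\<lambda>i L. L i) {1..n}
    (\<integral>x. x ^ 2 \<partial>D) (\<integral>x. x ^ 4 \<partial>D)"
  unfolding sample_meas_def
  using centered_indep_family_PiM[of D "\<lambda>x. x"] assms measurable_ident_sets[OF assms(2)] by simp

context
  fixes D :: "real measure" and n m :: nat and \<mu>2 \<mu>4 :: real
  assumes D: "prob_space D" "sets D = sets borel" "integrable D (\<lambda>x. x ^ 4)" "(\<integral>x. x \<partial>D) = 0"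
    and n: "n \<ge> 1" and m: "m \<ge> 2"
  defines "\<mu>2 \<equiv> \<integral>x. x ^ 2 \<partial>D" and "\<mu>4 \<equiv> \<integral>x. x ^ 4 \<partial>D"
begin

interpretation S: centered_indep_family "sample_meas D n" "\<lambda>i L. L i" "{1..n}" \<mu>2 \<mu>4
  unfolding \<mu>2_def \<mu>4_def using D by (rule centered_indep_family_sample)

private lemma sample_index_set: "finite {1..n}" "{1..n} \<subseteq> {1..n}" "{1..n} \<noteq> {}"
  using n by auto

private lemma denominators_nonzero: "real n \<noteq> 0" "real m \<noteq> 0" "real m - 1 \<noteq> 0"
  using n m by auto

private lemma EU_eq_central_power_sum: "EU m n = (\<lambda>L. S.C 2 {1..n} L / n)"
  using EU_eq[OF n m] by (intro ext) (simp add: empirical_central_moment_def)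

lemma integrable_EU: "integrable (sample_meas D n) (EU m n)"
  unfolding EU_eq_central_power_sum
  using S.integrable_central_power_sum_2[OF sample_index_set] by simp

lemma integrable_EU_sq: "integrable (sample_meas D n) (\<lambda>L. EU m n L ^ 2)"
  unfolding EU_eq_central_power_sum using S.integrable_central_power_sum_2_sq[OF sample_index_set]
  by (simp add: power_divide)

lemma expectation_EU:
  "S.expectation (EU m n) = (real n - 1) / real n * \<mu>2"
  unfolding EU_eq_central_power_sum
  using S.expectation_central_power_sum_2[OF sample_index_set] by simp

private lemma VarU_eq_central_power_sums: "VarU m n = (\<lambda>L. S.C 4 {1..n} L / n / m
    + (3 - real m) / (real m * (real m - 1)) * (S.C 2 {1..n} L ^ 2 / n ^ 2))"
  using VarU_eq[OF n m] by (intro ext) (simp add: empirical_central_moment_def power_divide)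

lemma integrable_VarU: "integrable (sample_meas D n) (VarU m n)"
  unfolding VarU_eq_central_power_sums using S.integrable_central_power_sum_4[OF sample_index_set]
    S.integrable_central_power_sum_2_sq[OF sample_index_set] by simp

lemma expectation_VarU:
  "S.expectation (VarU m n)
    = (real n - 1) / (real n * real m * (real m - 1)) *
        (3 * real m - 3 + (real n ^ 2 - 2 * real n + 3) / real n ^ 2 * (6 - 4 * real m))
        * \<mu>2 ^ 2
      + (real n - 1) / (real n * real m * (real m - 1)) *
        (real m - 1 + (real n - 1) / real n ^ 2 * (6 - 4 * real m)) * \<mu>4"
  (is "_ = ?rhs")
proof -
  have "S.expectation (VarU m n) = S.expectation (S.C 4 {1..n}) / n / m
      + (3 - real m) / (real m * (real m - 1)) * (S.expectation (\<lambda>L. S.C 2 {1..n} L ^ 2) / n ^ 2)"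
    unfolding VarU_eq_central_power_sums using S.integrable_central_power_sum_4[OF sample_index_set]
      S.integrable_central_power_sum_2_sq[OF sample_index_set] by simp
  also have "\<dots> = ?rhs"
    unfolding S.expectation_central_power_sum_4[OF sample_index_set]
      S.expectation_central_power_sum_2_sq[OF sample_index_set]
    using denominators_nonzero
    by (simp add: divide_simps) (simp add: algebra_simps power2_eq_square power3_eq_cube)
  finally show ?thesis .
qed

lemma variance_EU:
  "S.variance (EU m n) = (3 - real n) * (real n - 1) / real n ^ 3 * \<mu>2 ^ 2
    + (real n - 1) ^ 2 / real n ^ 3 * \<mu>4"
  (is "_ = ?rhs")
proof -
  have "S.variance (EU m n) = S.expectation (\<lambda>L. EU m n L ^ 2) - S.expectation (EU m n) ^ 2"
    using integrable_EU integrable_EU_sq by (rule S.variance_eq)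
  also have "\<dots> = S.expectation (\<lambda>L. S.C 2 {1..n} L ^ 2) / n ^ 2
      - ((real n - 1) / real n * \<mu>2) ^ 2"
    unfolding expectation_EU by (simp add: EU_eq_central_power_sum power_divide)
  also have "\<dots> = ?rhs"
    unfolding S.expectation_central_power_sum_2_sq[OF sample_index_set]
    using denominators_nonzero
    by (simp add: divide_simps) (simp add: algebra_simps power2_eq_square power3_eq_cube)
  finally show ?thesis .
qed

end

section \<open>Bagging\<close>

lemma prob_space_sample_meas: "prob_space D \<Longrightarrow> prob_space (sample_meas D n)"
  unfolding sample_meas_def by (rule prob_space_PiM)

lemma prob_space_bag_meas: "prob_space (bag_meas m n N)"
  unfolding bag_meas_def Unif_def by (rule prob_space_PiM) (rule prob_space_measure_pmf)

lemma prob_space_joint_meas: "prob_space D \<Longrightarrow> prob_space (joint_meas D n m N)"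
  unfolding joint_meas_def by (intro prob_space_pair prob_space_sample_meas prob_space_bag_meas)

lemma
  assumes n: "n \<ge> 1" and N: "N \<ge> 1"
  shows integrable_vtilde_bag: "integrable (bag_meas m n N) (vtilde m N L)"
    and integrable_vtilde_sq_bag: "integrable (bag_meas m n N) (\<lambda>B. vtilde m N L B ^ 2)"
    and expectation_vtilde_bag: "(\<integral>B. vtilde m N L B \<partial>bag_meas m n N) = EU m n L"
    and expectation_vtilde_sq_bag:
      "(\<integral>B. vtilde m N L B ^ 2 \<partial>bag_meas m n N) = EU m n L ^ 2 + VarU m n L / N"
proof -
  define W where "W u = vhat m (subsample L u) - EU m n L" for u
  have P: "prob_space (Unif m n)" unfolding Unif_def by (rule prob_space_measure_pmf)
  have "(\<integral>u. W u \<partial>Unif m n) = 0"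
    unfolding W_def EU_def using integrable_Unif[OF n] by (simp add: prob_space.prob_space[OF P])
  moreover have "(\<integral>u. W u ^ 2 \<partial>Unif m n) = VarU m n L"
    unfolding W_def VarU_def EU_def ..
  ultimately interpret B: centered_indep_family "bag_meas m n N" "\<lambda>i B. W (B i)" "{1..N}"
    "VarU m n L" "\<integral>u. W u ^ 4 \<partial>Unif m n"
    using centered_indep_family_PiM[OF P, of W "{1..N}"] integrable_Unif[OF n]
    by (simp add: bag_meas_def Unif_def)
  have J: "finite {1..N}" "{1..N} \<subseteq> {1..N}" by auto
  have vtilde: "vtilde m N L B = EU m n L + B.S 1 {1..N} B / N" for B
    using N by (simp add: vtilde_def W_def power_sum_def sum_subtractf field_simps)
  have vtilde_sq: "vtilde m N L B ^ 2
      = EU m n L ^ 2 + 2 * EU m n L / N * B.S 1 {1..N} B + B.S 1 {1..N} B ^ 2 / N ^ 2" for B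
    unfolding vtilde by (simp add: power2_sum power_divide algebra_simps)
  note int = B.integrable_power_sum[OF J, of 1] B.integrable_power_sum_power[OF J, of 1 2]
  show "integrable (bag_meas m n N) (vtilde m N L)"
    unfolding vtilde using int by auto
  show "integrable (bag_meas m n N) (\<lambda>B. vtilde m N L B ^ 2)"
    unfolding vtilde_sq using int by auto
  show "(\<integral>B. vtilde m N L B \<partial>bag_meas m n N) = EU m n L"
    unfolding vtilde using int B.expectation_power_sum_1[OF J] by (simp add: B.prob_space)
  show "(\<integral>B. vtilde m N L B ^ 2 \<partial>bag_meas m n N) = EU m n L ^ 2 + VarU m n L / N"
    unfolding vtilde_sq
    using int B.expectation_power_sum_1[OF J] B.expectation_power_sum_1_sq[OF J] N
    by (simp add: B.prob_space power2_eq_square)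
qed

lemma vhat_nonneg: "vhat m Y \<ge> 0"
proof (cases "m = 0")
  case False
  then show ?thesis unfolding vhat_def by (intro mult_nonneg_nonneg sum_nonneg) auto
qed (simp add: vhat_def)

lemma vtilde_nonneg: "vtilde m N L B \<ge> 0"
  unfolding vtilde_def by (intro mult_nonneg_nonneg sum_nonneg vhat_nonneg) auto

lemma borel_measurable_sample_coordinate:
  assumes "sets D = sets borel"
  shows "(\<lambda>L. L k) \<in> borel_measurable (sample_meas D n)"
proof (cases "k \<in> {1..n}")
  case True
  then have "(\<lambda>L. L k) \<in> measurable (sample_meas D n) D"
    unfolding sample_meas_def by (rule measurable_component_singleton)
  then show ?thesis unfolding measurable_cong_sets[OF refl assms, symmetric] .
next
  case False
  have "(\<lambda>L. undefined) \<in> borel_measurable (sample_meas D n)" by simp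
  then show ?thesis
    by (rule measurable_cong[THEN iffD1, rotated])
      (use False in \<open>auto simp: sample_meas_def space_PiM PiE_def extensional_def\<close>)
qed

lemma borel_measurable_vtilde:
  assumes "sets D = sets borel"
  shows "(\<lambda>z. vtilde m N (fst z) (snd z)) \<in> borel_measurable (joint_meas D n m N)"
proof -
  have sample_entry: "(\<lambda>z. fst z (snd z i j)) \<in> borel_measurable (joint_meas D n m N)"
    if "i \<in> {1..N}" for i j
  proof (rule measurable_compose_countable'[where I=UNIV and f="\<lambda>k z. fst z k"])
    show "(\<lambda>z. fst z k) \<in> borel_measurable (joint_meas D n m N)" for k
      unfolding joint_meas_def
      by (rule measurable_compose[OF measurable_fst borel_measurable_sample_coordinate[OF assms]])
    have "(\<lambda>B. B i) \<in> measurable (bag_meas m n N) (Unif m n)"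
      unfolding bag_meas_def using that by (rule measurable_component_singleton)
    then have "(\<lambda>B. B i j) \<in> measurable (bag_meas m n N) (count_space UNIV)"
      by (rule measurable_compose[where g="\<lambda>u. u j"]) (simp add: Unif_def)
    then show "(\<lambda>z. snd z i j) \<in> measurable (joint_meas D n m N) (count_space UNIV)"
      unfolding joint_meas_def by (rule measurable_compose[OF measurable_snd])
  qed simp
  show ?thesis
    unfolding vtilde_def vhat_def subsample_def
    by (intro borel_measurable_times borel_measurable_sum borel_measurable_power
      borel_measurable_diff measurable_const sample_entry) auto
qed

context
  fixes D :: "real measure" and n m N :: nat
  assumes D: "prob_space D" "sets D = sets borel" "integrable D (\<lambda>x. x ^ 4)" "(\<integral>x. x \<partial>D) = 0"
    and n: "n \<ge> 1" and m: "m \<ge> 2" and N: "N \<ge> 1"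
begin

interpretation S: prob_space "sample_meas D n"
  using D(1) by (rule prob_space_sample_meas)

interpretation B: prob_space "bag_meas m n N"
  by (rule prob_space_bag_meas)

interpretation pair_prob_space "sample_meas D n" "bag_meas m n N" ..

private lemma borel_measurable_case_vtilde:
  "case_prod (vtilde m N) \<in> borel_measurable (sample_meas D n \<Otimes>\<^sub>M bag_meas m n N)"
  using borel_measurable_vtilde[OF D(2), of m N n] by (simp add: joint_meas_def split_beta')

lemma
  shows integrable_vtilde_joint: "integrable (joint_meas D n m N) (case_prod (vtilde m N))"
    and expectation_vtilde_joint:
      "(\<integral>z. case_prod (vtilde m N) z \<partial>joint_meas D n m N) = S.expectation (EU m n)"
  using Fubini_nonneg[of "case_prod (vtilde m N)"] borel_measurable_case_vtilde vtilde_nonneg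
    integrable_vtilde_bag[OF n N] expectation_vtilde_bag[OF n N] integrable_EU[OF D n m]
  by (simp_all add: joint_meas_def split_beta')

lemma
  shows integrable_vtilde_sq_joint:
      "integrable (joint_meas D n m N) (\<lambda>z. case_prod (vtilde m N) z ^ 2)"
    and expectation_vtilde_sq_joint:
      "(\<integral>z. case_prod (vtilde m N) z ^ 2 \<partial>joint_meas D n m N)
        = S.expectation (\<lambda>L. EU m n L ^ 2) + S.expectation (VarU m n) / N"
proof -
  have "integrable (sample_meas D n) (\<lambda>L. EU m n L ^ 2 + VarU m n L / N)"
    using integrable_EU_sq[OF D n m] integrable_VarU[OF D n m] by simp
  then show "integrable (joint_meas D n m N) (\<lambda>z. case_prod (vtilde m N) z ^ 2)"
    and "(\<integral>z. case_prod (vtilde m N) z ^ 2 \<partial>joint_meas D n m N)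
      = S.expectation (\<lambda>L. EU m n L ^ 2) + S.expectation (VarU m n) / N"
    using Fubini_nonneg[of "\<lambda>z. case_prod (vtilde m N) z ^ 2"] borel_measurable_case_vtilde
      integrable_vtilde_sq_bag[OF n N] expectation_vtilde_sq_bag[OF n N]
      integrable_EU_sq[OF D n m] integrable_VarU[OF D n m]
    by (simp_all add: joint_meas_def)
qed

lemma variance_vtilde_joint:
  "prob_space.variance (joint_meas D n m N) (case_prod (vtilde m N))
    = S.expectation (VarU m n) / N + S.variance (EU m n)"
  using prob_space.variance_eq[OF prob_space_joint_meas[OF D(1)]
      integrable_vtilde_joint integrable_vtilde_sq_joint]
    S.variance_eq[OF integrable_EU[OF D n m] integrable_EU_sq[OF D n m]]
    expectation_vtilde_joint expectation_vtilde_sq_joint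
  by simp

end

theorem theorem2:
  fixes D :: "real measure" and n m N :: nat
  assumes "prob_space D" and "sets D = sets borel"
    and "integrable D (\<lambda>x. x ^ 4)"
    and "(\<integral>x. x \<partial>D) = 0"
    and "n \<ge> 2" and "m \<ge> 2" and "N \<ge> 1"
  defines "\<mu>2 \<equiv> \<integral>x. x ^ 2 \<partial>D" and "\<mu>4 \<equiv> \<integral>x. x ^ 4 \<partial>D"
  shows
    "(prob_space.expectation (joint_meas D n m N) (\<lambda>(L, B). vtilde m N L B)
       = (real n - 1) / real n * \<mu>2) \<and>
    (prob_space.variance (joint_meas D n m N) (\<lambda>(L, B). vtilde m N L B)
       = (1 / real N) * prob_space.expectation (sample_meas D n) (VarU m n)
         + prob_space.variance (sample_meas D n) (EU m n)) \<and>
    (prob_space.expectation (sample_meas D n) (VarU m n)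
       = (real n - 1) / (real n * real m * (real m - 1)) *
           (3 * real m - 3 + (real n ^ 2 - 2 * real n + 3) / real n ^ 2 * (6 - 4 * real m)) * \<mu>2 ^ 2
         + (real n - 1) / (real n * real m * (real m - 1)) *
           (real m - 1 + (real n - 1) / real n ^ 2 * (6 - 4 * real m)) * \<mu>4) \<and>
    (prob_space.variance (sample_meas D n) (EU m n)
       = (3 - real n) * (real n - 1) / real n ^ 3 * \<mu>2 ^ 2
         + (real n - 1) ^ 2 / real n ^ 3 * \<mu>4) \<and>
    (prob_space.expectation (joint_meas D n m N) (\<lambda>(L, B). (vtilde m N L B - \<mu>2) ^ 2)
       = prob_space.variance (joint_meas D n m N) (\<lambda>(L, B). vtilde m N L B)
         + 1 / real n ^ 2 * \<mu>2 ^ 2)"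
proof -
  have n: "n \<ge> 1" using assms(5) by simp
  note D = assms(1-4) and m = assms(6) and N = assms(7)
  interpret J: prob_space "joint_meas D n m N"
    using D(1) by (rule prob_space_joint_meas)
  have "J.expectation (\<lambda>z. (case_prod (vtilde m N) z - \<mu>2) ^ 2)
      = J.variance (case_prod (vtilde m N)) + (J.expectation (case_prod (vtilde m N)) - \<mu>2) ^ 2"
    using integrable_vtilde_joint[OF D n m N] integrable_vtilde_sq_joint[OF D n m N]
    by (rule J.bias_variance_decomposition)
  moreover have "(\<lambda>(L, B). (vtilde m N L B - \<mu>2) ^ 2) = (\<lambda>z. (case_prod (vtilde m N) z - \<mu>2) ^ 2)"
    by auto
  moreover have "((real n - 1) / real n * \<mu>2 - \<mu>2) ^ 2 = 1 / real n ^ 2 * \<mu>2 ^ 2"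
    using n by (simp add: field_simps power2_eq_square)
  ultimately show ?thesis
    using expectation_vtilde_joint[OF D n m N] expectation_EU[OF D n m, folded \<mu>2_def]
      variance_vtilde_joint[OF D n m N] expectation_VarU[OF D n m, folded \<mu>2_def \<mu>4_def]
      variance_EU[OF D n m, folded \<mu>2_def \<mu>4_def]
    by simp
qed

end
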